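(* Let $N\ge 1$ and let $u^1,\dots,u^{N+1}$ be independent variables. Let $\sigma^0=1$ and $\sigma^r$ ($1\le r\le N$) be the elementary symmetric polynomials of $u^1,\dots,u^N$, so $\prod_{i=1}^N(p+u^i)=\sum_{i=0}^Np^i\sigma^{N-i}$, and define $$s^r=\sum_{n=0}^{r}(-1)^n\sigma^{r-n}(u^{N+1})^n,\qquad r=1,\dots,N.$$ Then for all $m,i\in\{1,\dots,N\}$, $$\frac{\partial s^m}{\partial u^i}+\frac{\partial s^m}{\partial u^{N+1}}=(u^{N+1}-u^i)\,P_{m,i},$$ where $P_{m,i}$ is a polynomial in $u^1,\dots,u^{N+1}$ of degree $m-2$ (to be read as $P_{m,i}=0$ when $m=1$).
   Context: The $s^r$ are the coefficients in the expansion $\frac{\prod_{i=1}^N(p+u^i)}{p+u^{N+1}}=\sum_{n=0}^{N-1}p^ns^{N-1-n}+\frac{s^N}{p+u^{N+1}}$ (with $s^0=1$). *)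

theory Defs
  imports "HOL-Analysis.Analysis"
begin

definition esym :: "nat \<Rightarrow> nat \<Rightarrow> (nat \<Rightarrow> real) \<Rightarrow> real" where
  "esym N r u = (\<Sum>S\<in>{S. S \<subseteq> {1..N} \<and> card S = r}. \<Prod>j\<in>S. u j)"

definition sfun :: "nat \<Rightarrow> nat \<Rightarrow> (nat \<Rightarrow> real) \<Rightarrow> real" where
  "sfun N r u = (\<Sum>n=0..r. (-1)^n * esym N (r - n) u * u (N+1) ^ n)"

text \<open>Multivariate real polynomials in the variables u 1, ..., u k, represented by
  their coefficient function on exponent vectors (monomials).\<close>
definition is_mpoly :: "nat \<Rightarrow> ((nat \<Rightarrow> nat) \<Rightarrow> real) \<Rightarrow> bool" where
  "is_mpoly k c \<longleftrightarrow> finite {\<alpha>. c \<alpha> \<noteq> 0} \<and>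
     (\<forall>\<alpha>. c \<alpha> \<noteq> 0 \<longrightarrow> (\<forall>j. j \<notin> {1..k} \<longrightarrow> \<alpha> j = 0))"

definition mpoly_eval :: "nat \<Rightarrow> ((nat \<Rightarrow> nat) \<Rightarrow> real) \<Rightarrow> (nat \<Rightarrow> real) \<Rightarrow> real" where
  "mpoly_eval k c u = (\<Sum>\<alpha>\<in>{\<alpha>. c \<alpha> \<noteq> 0}. c \<alpha> * (\<Prod>j\<in>{1..k}. u j ^ \<alpha> j))"

definition mono_degree :: "nat \<Rightarrow> (nat \<Rightarrow> nat) \<Rightarrow> nat" where
  "mono_degree k \<alpha> = (\<Sum>j\<in>{1..k}. \<alpha> j)"

definition mpoly_has_degree :: "nat \<Rightarrow> ((nat \<Rightarrow> nat) \<Rightarrow> real) \<Rightarrow> nat \<Rightarrow> bool" where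
  "mpoly_has_degree k c d \<longleftrightarrow> (\<exists>\<alpha>. c \<alpha> \<noteq> 0 \<and> mono_degree k \<alpha> = d) \<and>
     (\<forall>\<alpha>. c \<alpha> \<noteq> 0 \<longrightarrow> mono_degree k \<alpha> \<le> d)"

end

theory Submission
  imports Defs
begin

(* Write t = u^{N+1}, a = u^i, let \<tau>^r be the elementary symmetric polynomials of the
   u^j with j \<noteq> i, and T_k(t) = \<Sum>_{n\<le>k} (-1)^n \<tau>^{k-n} t^n, so that T_{k+1} = \<tau>^{k+1} - t T_k.
   Since \<sigma>^{r+1} = \<tau>^{r+1} + a \<tau>^r, we get s^m = T_m(t) + a T_{m-1}(t). Hence
   \<partial>s^m/\<partial>a = T_{m-1}, while differentiating the recursion gives
   \<partial>s^m/\<partial>t = T_m' + a T_{m-1}' = -T_{m-1} - (t - a) T_{m-1}'.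
   The sum is therefore (t - a) P with P = -T_{m-1}' = \<Sum>_{n<m-1} (-1)^n (n+1) \<tau>^{m-2-n} t^n,
   whose monomials are distinct and all of degree m - 2. *)

definition esym_on :: "nat set \<Rightarrow> nat \<Rightarrow> (nat \<Rightarrow> real) \<Rightarrow> real" where
  "esym_on A r u = (\<Sum>S\<in>{S. S \<subseteq> A \<and> card S = r}. \<Prod>j\<in>S. u j)"

lemma esym_eq_esym_on: "esym N r u = esym_on {1..N} r u"
  by (simp add: esym_def esym_on_def)

lemma esym_on_Pow:
  assumes "finite A"
  shows "esym_on A r u = (\<Sum>S\<in>Pow A. if card S = r then \<Prod>j\<in>S. u j else 0)"
proof -
  have "{S. S \<subseteq> A \<and> card S = r} = {S \<in> Pow A. card S = r}"
    by auto
  then show ?thesis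
    using assms by (simp add: esym_on_def sum.inter_filter[symmetric])
qed

lemma esym_on_0: "finite A \<Longrightarrow> esym_on A 0 u = 1"
  by (simp add: esym_on_Pow card_eq_0_iff finite_subset)

lemma esym_on_insert_Suc:
  assumes "finite A" "i \<notin> A"
  shows "esym_on (insert i A) (Suc r) u = esym_on A (Suc r) u + u i * esym_on A r u"
proof -
  have inj: "inj_on (insert i) (Pow A)"
    using assms by (auto simp: inj_on_def)
  have "esym_on (insert i A) (Suc r) u
      = esym_on A (Suc r) u + (\<Sum>S\<in>insert i ` Pow A. if card S = Suc r then \<Prod>j\<in>S. u j else 0)"
    using assms unfolding esym_on_Pow[OF assms(1)] esym_on_Pow[OF finite_insert[THEN iffD2, OF assms(1)]] Pow_insert
    by (intro sum.union_disjoint) auto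
  also have "(\<Sum>S\<in>insert i ` Pow A. if card S = Suc r then \<Prod>j\<in>S. u j else 0) = u i * esym_on A r u"
    unfolding sum.reindex[OF inj] esym_on_Pow[OF assms(1)] sum_distrib_left o_def
  proof (rule sum.cong)
    fix S assume "S \<in> Pow A"
    then have "finite S" "i \<notin> S"
      using assms finite_subset by auto
    then show "(if card (insert i S) = Suc r then \<Prod>j\<in>insert i S. u j else 0)
        = u i * (if card S = r then \<Prod>j\<in>S. u j else 0)"
      by simp
  qed simp
  finally show ?thesis .
qed

lemma esym_on_fun_upd: "j \<notin> A \<Longrightarrow> esym_on A r (u(j := x)) = esym_on A r u"
  unfolding esym_on_def by (intro sum.cong refl prod.cong) auto

lemma esym_on_remove_Suc:
  assumes "finite A" "i \<in> A"
  shows "esym_on A (Suc r) u = esym_on (A - {i}) (Suc r) u + u i * esym_on (A - {i}) r u"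
  using esym_on_insert_Suc[of "A - {i}" i] assms by (simp add: insert_absorb)

definition alt_sum :: "(nat \<Rightarrow> real) \<Rightarrow> nat \<Rightarrow> real \<Rightarrow> real" where
  "alt_sum c k t = (\<Sum>n=0..k. (-1)^n * c (k - n) * t^n)"

lemma sfun_eq_alt_sum: "sfun N r u = alt_sum (\<lambda>r. esym N r u) r (u (N+1))"
  by (simp add: sfun_def alt_sum_def)

lemma alt_sum_0 [simp]: "alt_sum c 0 t = c 0"
  by (simp add: alt_sum_def)

lemma alt_sum_Suc: "alt_sum c (Suc k) t = c (Suc k) - t * alt_sum c k t"
  unfolding alt_sum_def sum.atLeast0_atMost_Suc_shift
  by (simp add: sum_distrib_left sum_negf algebra_simps)

lemma alt_sum_Suc_shift:
  assumes "\<sigma> 0 = \<tau> 0" and "\<And>r. \<sigma> (Suc r) = \<tau> (Suc r) + a * \<tau> r"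
  shows "alt_sum \<sigma> (Suc k) t = alt_sum \<tau> (Suc k) t + a * alt_sum \<tau> k t"
proof (induction k)
  case 0
  then show ?case by (simp add: alt_sum_Suc assms algebra_simps)
next
  case (Suc k)
  then show ?case
    by (simp only: alt_sum_Suc[of _ "Suc k"] assms Suc.IH) (simp add: alt_sum_Suc algebra_simps)
qed

lemma alt_sum_has_deriv: "(alt_sum c k has_real_derivative deriv (alt_sum c k) t) (at t)"
  unfolding alt_sum_def[abs_def] DERIV_deriv_iff_real_differentiable
  by (auto intro!: derivative_intros)

lemma deriv_alt_sum_Suc:
  "deriv (alt_sum c (Suc k)) t = - alt_sum c k t - t * deriv (alt_sum c k) t"
proof -
  have "alt_sum c (Suc k) = (\<lambda>t. c (Suc k) - t * alt_sum c k t)"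
    by (simp add: alt_sum_Suc fun_eq_iff)
  moreover have "((\<lambda>t. c (Suc k) - t * alt_sum c k t) has_real_derivative
      - alt_sum c k t - t * deriv (alt_sum c k) t) (at t)"
    by (auto intro!: derivative_eq_intros alt_sum_has_deriv)
  ultimately show ?thesis
    by (simp add: DERIV_imp_deriv)
qed

lemma deriv_alt_sum:
  "deriv (alt_sum c k) t = - (\<Sum>n<k. (-1)^n * of_nat (Suc n) * c (k - 1 - n) * t^n)"
proof -
  have "(alt_sum c k has_real_derivative (\<Sum>n=0..k. (-1)^n * c (k - n) * (of_nat n * t^(n - 1)))) (at t)"
    unfolding alt_sum_def[abs_def] by (auto intro!: derivative_eq_intros simp: mult_ac)
  moreover have "(\<Sum>n=0..k. (-1)^n * c (k - n) * (of_nat n * t^(n - 1)))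
      = - (\<Sum>n<k. (-1)^n * of_nat (Suc n) * c (k - 1 - n) * t^n)"
    by (cases k) (simp_all only: sum.atLeast0_atMost_Suc_shift,
        auto simp: atLeast0AtMost lessThan_Suc_atMost[symmetric] sum_negf mult_ac)
  ultimately show ?thesis
    by (simp add: DERIV_imp_deriv)
qed

lemma sfun_Suc_split:
  assumes "i \<in> {1..N}"
  shows "sfun N (Suc k) u = alt_sum (\<lambda>r. esym_on ({1..N} - {i}) r u) (Suc k) (u (N+1))
           + u i * alt_sum (\<lambda>r. esym_on ({1..N} - {i}) r u) k (u (N+1))"
  unfolding sfun_eq_alt_sum
  by (rule alt_sum_Suc_shift)
     (simp_all only: esym_eq_esym_on esym_on_remove_Suc[OF finite_atLeastAtMost assms]
       esym_on_0 finite_atLeastAtMost finite_Diff)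

lemma deriv_sfun_sum:
  fixes u :: "nat \<Rightarrow> real"
  assumes "i \<in> {1..N}"
  defines "\<tau> \<equiv> \<lambda>r. esym_on ({1..N} - {i}) r u"
  shows "deriv (\<lambda>x. sfun N (Suc k) (u(i := x))) (u i)
           + deriv (\<lambda>x. sfun N (Suc k) (u(N+1 := x))) (u (N+1))
         = (u (N+1) - u i) * - deriv (alt_sum \<tau> k) (u (N+1))"
proof -
  have upd_i: "sfun N (Suc k) (u(i := x)) = alt_sum \<tau> (Suc k) (u (N+1)) + x * alt_sum \<tau> k (u (N+1))" for x
    using sfun_Suc_split[OF assms(1), of k "u(i := x)"] assms by (simp add: esym_on_fun_upd)
  have upd_last: "sfun N (Suc k) (u(N+1 := x)) = alt_sum \<tau> (Suc k) x + u i * alt_sum \<tau> k x" for x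
    using sfun_Suc_split[OF assms(1), of k "u(N+1 := x)"] assms by (simp add: esym_on_fun_upd)
  have "deriv (\<lambda>x. sfun N (Suc k) (u(i := x))) (u i) = alt_sum \<tau> k (u (N+1))"
    unfolding upd_i by (rule DERIV_imp_deriv) (auto intro!: derivative_eq_intros)
  moreover have "deriv (\<lambda>x. sfun N (Suc k) (u(N+1 := x))) (u (N+1))
      = deriv (alt_sum \<tau> (Suc k)) (u (N+1)) + u i * deriv (alt_sum \<tau> k) (u (N+1))"
    unfolding upd_last by (rule DERIV_imp_deriv) (auto intro!: derivative_eq_intros alt_sum_has_deriv)
  ultimately show ?thesis
    by (simp add: deriv_alt_sum_Suc algebra_simps)
qed

definition mpoly_of_terms :: "'a set \<Rightarrow> ('a \<Rightarrow> nat \<Rightarrow> nat) \<Rightarrow> ('a \<Rightarrow> real) \<Rightarrow> (nat \<Rightarrow> nat) \<Rightarrow> real" where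
  "mpoly_of_terms I e w \<alpha> = (if \<alpha> \<in> e ` I then w (the_inv_into I e \<alpha>) else 0)"

lemma mpoly_of_terms_exps:
  "inj_on e I \<Longrightarrow> p \<in> I \<Longrightarrow> mpoly_of_terms I e w (e p) = w p"
  by (simp add: mpoly_of_terms_def the_inv_into_f_f)

lemma mpoly_of_terms_nonzero_iff:
  assumes "inj_on e I" "\<And>p. p \<in> I \<Longrightarrow> w p \<noteq> 0"
  shows "mpoly_of_terms I e w \<alpha> \<noteq> 0 \<longleftrightarrow> \<alpha> \<in> e ` I"
  using assms by (auto simp: mpoly_of_terms_exps) (simp add: mpoly_of_terms_def split: if_splits)

lemma is_mpoly_of_terms:
  assumes "finite I" "inj_on e I" "\<And>p. p \<in> I \<Longrightarrow> w p \<noteq> 0"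
    and "\<And>p j. p \<in> I \<Longrightarrow> j \<notin> {1..k} \<Longrightarrow> e p j = 0"
  shows "is_mpoly k (mpoly_of_terms I e w)"
  using assms by (auto simp: is_mpoly_def mpoly_of_terms_nonzero_iff[OF assms(2,3)])

lemma mpoly_eval_of_terms:
  assumes "inj_on e I" "\<And>p. p \<in> I \<Longrightarrow> w p \<noteq> 0"
  shows "mpoly_eval k (mpoly_of_terms I e w) u = (\<Sum>p\<in>I. w p * (\<Prod>j\<in>{1..k}. u j ^ e p j))"
  using assms
  by (simp add: mpoly_eval_def mpoly_of_terms_nonzero_iff sum.reindex mpoly_of_terms_exps)

lemma mpoly_has_degree_of_terms:
  assumes "inj_on e I" "\<And>p. p \<in> I \<Longrightarrow> w p \<noteq> 0"
    and "p\<^sub>0 \<in> I" "\<And>p. p \<in> I \<Longrightarrow> mono_degree k (e p) = d"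
  shows "mpoly_has_degree k (mpoly_of_terms I e w) d"
  using assms unfolding mpoly_has_degree_def
  by (auto simp: mpoly_of_terms_nonzero_iff[OF assms(1,2)])

definition set_power_exps :: "nat \<Rightarrow> nat set \<Rightarrow> nat \<Rightarrow> nat \<Rightarrow> nat" where
  "set_power_exps v S n j = (if j \<in> S then 1 else 0) + (if j = v then n else 0)"

lemma prod_power_set_power_exps:
  assumes "S \<subseteq> {1..k}" "v \<in> {1..k}"
  shows "(\<Prod>j\<in>{1..k}. u j ^ set_power_exps v S n j) = (\<Prod>j\<in>S. u j) * u v ^ n"
proof -
  have "(\<Prod>j\<in>{1..k}. u j ^ set_power_exps v S n j)
      = (\<Prod>j\<in>{1..k}. if j \<in> S then u j else 1) * (\<Prod>j\<in>{1..k}. if j = v then u j ^ n else 1)"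
    unfolding prod.distrib[symmetric] by (rule prod.cong) (auto simp: set_power_exps_def power_add)
  then show ?thesis
    using assms by (simp add: prod.If_cases Int_absorb1)
qed

lemma mono_degree_set_power_exps:
  assumes "S \<subseteq> {1..k}" "v \<in> {1..k}"
  shows "mono_degree k (set_power_exps v S n) = card S + n"
  using assms unfolding mono_degree_def set_power_exps_def
  by (simp add: sum.distrib Int_absorb1 flip: sum.inter_restrict)

lemma set_power_exps_inject:
  assumes "v \<notin> S" "v \<notin> S'" "set_power_exps v S n = set_power_exps v S' n'"
  shows "S = S'" "n = n'"
proof -
  show "n = n'"
    using fun_cong[OF assms(3), of v] assms(1,2) by (simp add: set_power_exps_def)
  show "S = S'"
  proof (rule set_eqI)
    fix j
    show "j \<in> S \<longleftrightarrow> j \<in> S'"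
      using fun_cong[OF assms(3), of j] assms(1,2)
      by (cases "j = v") (auto simp: set_power_exps_def split: if_splits)
  qed
qed

lemma esym_power_sum_is_mpoly:
  assumes "B \<subseteq> {1..k}" "v \<in> {1..k}" "v \<notin> B" "\<And>n. w n \<noteq> 0"
  shows "\<exists>c. is_mpoly k c \<and>
           (if d = 0 then (\<forall>\<alpha>. c \<alpha> = 0) else mpoly_has_degree k c (d - 1)) \<and>
           (\<forall>u. mpoly_eval k c u = (\<Sum>n<d. w n * esym_on B (d - 1 - n) u * u v ^ n))"
proof -
  define I where "I = (SIGMA n:{..<d}. {S. S \<subseteq> B \<and> card S = d - 1 - n})"
  define e where "e = (\<lambda>(n, S). set_power_exps v S n)"
  define c where "c = mpoly_of_terms I e (\<lambda>(n, S). w n)"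
  have fin_B: "finite B"
    using assms(1) finite_subset by blast
  have fin_I: "finite I"
    unfolding I_def using fin_B by (auto intro: finite_subset[of _ "Pow B"])
  have I_sub: "S \<subseteq> {1..k}" "v \<notin> S" if "(n, S) \<in> I" for n S
    using that assms(1,3) by (auto simp: I_def)
  have inj: "inj_on e I"
  proof (rule inj_onI)
    fix p q assume "p \<in> I" "q \<in> I" "e p = e q"
    moreover obtain n S n' S' where "p = (n, S)" "q = (n', S')"
      by fastforce
    ultimately show "p = q"
      using I_sub set_power_exps_inject[of v S S' n n'] by (simp add: e_def)
  qed
  have w_nz: "(\<lambda>(n, S). w n) p \<noteq> 0" for p
    using assms(4) by (simp add: split_beta)
  have "is_mpoly k c"
    unfolding c_def
  proof (rule is_mpoly_of_terms[OF fin_I inj w_nz])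
    fix p j assume "p \<in> I" "j \<notin> {1..k}"
    moreover obtain n S where "p = (n, S)"
      by fastforce
    ultimately have "j \<notin> S" "j \<noteq> v"
      using I_sub(1)[of n S] assms(2) by auto
    then show "e p j = 0"
      using \<open>p = (n, S)\<close> by (simp add: e_def set_power_exps_def)
  qed
  moreover have "if d = 0 then (\<forall>\<alpha>. c \<alpha> = 0) else mpoly_has_degree k c (d - 1)"
  proof (cases "d = 0")
    case True
    then show ?thesis by (simp add: c_def I_def mpoly_of_terms_def)
  next
    case False
    have "(d - 1, {}) \<in> I"
      using False by (simp add: I_def)
    moreover have "mono_degree k (e p) = d - 1" if "p \<in> I" for p
      using that I_sub assms(2) by (cases p) (auto simp: e_def I_def mono_degree_set_power_exps)
    ultimately show ?thesis
      using False by (simp add: c_def mpoly_has_degree_of_terms[OF inj w_nz])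
  qed
  moreover have "mpoly_eval k c u = (\<Sum>n<d. w n * esym_on B (d - 1 - n) u * u v ^ n)" for u
  proof -
    have "mpoly_eval k c u = (\<Sum>(n, S)\<in>I. w n * ((\<Prod>j\<in>S. u j) * u v ^ n))"
      unfolding c_def mpoly_eval_of_terms[OF inj w_nz]
    proof (intro sum.cong refl, clarify)
      fix n S assume "(n, S) \<in> I"
      then have "(\<Prod>j\<in>{1..k}. u j ^ e (n, S) j) = (\<Prod>j\<in>S. u j) * u v ^ n"
        unfolding e_def using prod_power_set_power_exps[OF I_sub(1) assms(2)] by simp
      then show "w n * (\<Prod>j\<in>{1..k}. u j ^ e (n, S) j) = w n * ((\<Prod>j\<in>S. u j) * u v ^ n)"
        by simp
    qed
    also have "\<dots> = (\<Sum>n<d. w n * esym_on B (d - 1 - n) u * u v ^ n)"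
      unfolding I_def using fin_B
      by (subst sum.Sigma[symmetric])
         (auto simp: esym_on_def sum_distrib_left sum_distrib_right mult_ac intro: finite_subset[of _ "Pow B"])
    finally show ?thesis .
  qed
  ultimately show ?thesis by blast
qed

theorem lemma9:
  fixes N m i :: nat
  assumes "N \<ge> 1" and "1 \<le> m" and "m \<le> N" and "1 \<le> i" and "i \<le> N"
  shows "\<exists>c. is_mpoly (N+1) c \<and>
           (if m = 1 then (\<forall>\<alpha>. c \<alpha> = 0) else mpoly_has_degree (N+1) c (m - 2)) \<and>
           (\<forall>u :: nat \<Rightarrow> real.
              deriv (\<lambda>x. sfun N m (u(i := x))) (u i)
              + deriv (\<lambda>x. sfun N m (u(N+1 := x))) (u (N+1))
              = (u (N+1) - u i) * mpoly_eval (N+1) c u)"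
proof -
  obtain k where m: "m = Suc k"
    using assms(2) by (cases m) auto
  have i: "i \<in> {1..N}"
    using assms(4,5) by simp
  obtain c where c: "is_mpoly (N+1) c"
      "if k = 0 then (\<forall>\<alpha>. c \<alpha> = 0) else mpoly_has_degree (N+1) c (k - 1)"
      "\<And>u. mpoly_eval (N+1) c u
         = (\<Sum>n<k. (-1)^n * of_nat (Suc n) * esym_on ({1..N} - {i}) (k - 1 - n) u * u (N+1) ^ n)"
    using esym_power_sum_is_mpoly[of "{1..N} - {i}" "N+1" "N+1" "\<lambda>n. (-1)^n * of_nat (Suc n)" k]
    by fastforce
  have "deriv (\<lambda>x. sfun N m (u(i := x))) (u i) + deriv (\<lambda>x. sfun N m (u(N+1 := x))) (u (N+1))
      = (u (N+1) - u i) * mpoly_eval (N+1) c u" for u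
    unfolding m deriv_sfun_sum[OF i] deriv_alt_sum c(3) by (simp add: mult_ac)
  then show ?thesis
    using c(1,2) m by (auto simp: numeral_2_eq_2)
qed

end
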